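(* Let $\mathcal{X}\subset\mathbb{R}^d$, $\mathcal{Y}=\{1,\dots,C\}$, and let $f_{\bm{\theta}}:\mathcal{X}\to\mathbb{R}^C$ be a score function with $F_{\bm{\theta}}(\bm{x})=\operatorname{argmax}_{c}[f_{\bm{\theta}}(\bm{x})]_c$. Let $z(\cdot)$ be any measurable mapping from $\mathcal{X}$ to $\mathcal{X}$ satisfying $$z(\bm{x})\in\operatorname*{argmax}_{\bm{x}'\in\mathcal{B}_p(\bm{x},\varepsilon)}\mathbbm{1}\big(F_{\bm{\theta}}(\bm{x})\neq F_{\bm{\theta}}(\bm{x}')\big)$$ for every $\bm{x}\in\mathcal{X}$. Then for every $\bm{x}\in\mathcal{X}$ and every label $Y\in\mathcal{Y}$, $$\mathbbm{1}\big\{\exists\,\bm{x}'\in\mathcal{B}_p(\bm{x},\varepsilon): F_{\bm{\theta}}(\bm{x})\neq F_{\bm{\theta}}(\bm{x}'),\ F_{\bm{\theta}}(\bm{x})=Y\big\}\le \mathbbm{1}\big\{F_{\bm{\theta}}(\bm{x})\neq F_{\bm{\theta}}(z(\bm{x})),\ Y\neq F_{\bm{\theta}}(z(\bm{x}))\big\}.$$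
   Context: $\mathcal{B}_p(\bm{x},\varepsilon)=\{\bm{x}'\in\mathcal{X}:\|\bm{x}-\bm{x}'\|_p\le\varepsilon\}$ for fixed $p$ and $\varepsilon>0$. $\mathbbm{1}\{\cdot\}$ is the indicator function, and a comma inside it denotes conjunction of conditions. *)

theory Defs
  imports "HOL-Analysis.Analysis"
begin

definition lp_norm :: "ereal \<Rightarrow> real ^ 'd \<Rightarrow> real" where
  "lp_norm p v = (if p = \<infinity> then (MAX i \<in> UNIV. \<bar>v $ i\<bar>)
                  else (\<Sum>i\<in>UNIV. \<bar>v $ i\<bar> powr real_of_ereal p) powr (1 / real_of_ereal p))"

definition lp_ball :: "(real ^ 'd) set \<Rightarrow> ereal \<Rightarrow> real ^ 'd \<Rightarrow> real \<Rightarrow> (real ^ 'd) set" where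
  "lp_ball X p x \<epsilon> = {x' \<in> X. lp_norm p (x - x') \<le> \<epsilon>}"

definition classifier :: "nat \<Rightarrow> ('x \<Rightarrow> nat \<Rightarrow> real) \<Rightarrow> 'x \<Rightarrow> nat" where
  "classifier C f x = (LEAST c. c \<in> {1..C} \<and> (\<forall>c'\<in>{1..C}. f x c' \<le> f x c))"

definition argmax_set :: "('a \<Rightarrow> real) \<Rightarrow> 'a set \<Rightarrow> 'a set" where
  "argmax_set g S = {s \<in> S. \<forall>t\<in>S. g t \<le> g s}"

end

theory Submission
  imports Defs
begin

lemma argmax_set_of_bool_holds:
  assumes "s \<in> argmax_set (\<lambda>t. of_bool (P t) :: real) S" and "t \<in> S" and "P t"
  shows "P s"
  using assms unfolding argmax_set_def by fastforce

theorem lemma2: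
  fixes X :: "(real ^ 'd) set" and C :: nat and f :: "real ^ 'd \<Rightarrow> nat \<Rightarrow> real"
    and p :: ereal and \<epsilon> :: real and z :: "real ^ 'd \<Rightarrow> real ^ 'd"
  assumes "C \<ge> 1" and "p \<ge> 1" and "\<epsilon> > 0"
    and "z ` X \<subseteq> X"
    and "z \<in> measurable (restrict_space borel X) (restrict_space borel X)"
    and "\<And>x. x \<in> X \<Longrightarrow> z x \<in> argmax_set
           (\<lambda>x'. of_bool (classifier C f x \<noteq> classifier C f x')) (lp_ball X p x \<epsilon>)"
    and "x \<in> X" and "Y \<in> {1..C}"
  shows "(of_bool (\<exists>x'\<in>lp_ball X p x \<epsilon>. classifier C f x \<noteq> classifier C f x'
                                          \<and> classifier C f x = Y) :: real)
         \<le> of_bool (classifier C f x \<noteq> classifier C f (z x) \<and> Y \<noteq> classifier C f (z x))"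
proof (cases "\<exists>x'\<in>lp_ball X p x \<epsilon>. classifier C f x \<noteq> classifier C f x' \<and> classifier C f x = Y")
  case True
  then obtain x' where ball: "x' \<in> lp_ball X p x \<epsilon>"
    and flips: "classifier C f x \<noteq> classifier C f x'" and label: "classifier C f x = Y"
    by blast
  have "classifier C f x \<noteq> classifier C f (z x)"
    using argmax_set_of_bool_holds[OF assms(6)[OF assms(7)] ball flips] .
  with label show ?thesis by simp
next
  case False
  then show ?thesis by auto
qed

end
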